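(* Let $\beta,\mu,\tau>0$ be constants, let $g(x)=\dfrac{g^-\theta_g^n+g^+x^n}{\theta_g^n+x^n}$ with $g^\pm,\theta_g,n>0$, and put $g_0=\min\{g^-,g^+\}$, $g_U=\max\{g^-,g^+\}$. For $\xi>0$ let $\gamma=\gamma(\xi)=\frac{\beta}{\xi}e^{-\mu\tau}g(\xi)$, let $k\ge0$ be an integer and let $\omega_k>0$ satisfy $\omega_k\cot(\omega_k\tau)=-\gamma$ and $\omega_k\tau\in(\pi/2+2k\pi,\pi+2k\pi)$. Let $s_k(\xi)=\sqrt{1+(\omega_k/\gamma)^2}$. Then for all $\xi>0$: (1) $m_k(\xi)\le s_k(\xi)\le M_k(\xi)$, where $$m_k(\xi)=\Big(1+\Big(\frac{\pi(2k+1/2)}{\beta\tau e^{-\mu\tau}g_U}\Big)^2\xi^2\Big)^{1/2},\qquad M_k(\xi)=\Big(1+\Big(\frac{\pi(2k+1)}{\beta\tau e^{-\mu\tau}g_0}\Big)^2\xi^2\Big)^{1/2};$$ (2) $1<s_k(\xi)<1+\frac{\pi(2k+1)}{\beta\tau e^{-\mu\tau}g_0}\,\xi$. *)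

theory Defs
  imports Complex_Main
begin

definition hill_g :: "real \<Rightarrow> real \<Rightarrow> real \<Rightarrow> real \<Rightarrow> real \<Rightarrow> real" where
  "hill_g gm gp thg n x = (gm * thg powr n + gp * x powr n) / (thg powr n + x powr n)"

end

theory Submission
  imports Defs
begin

text \<open>With \<open>\<gamma> = \<beta> exp(-\<mu>\<tau>) g(\<xi>) / \<xi>\<close> the ratio \<open>\<omega>/\<gamma>\<close> equals
  \<open>(\<omega>\<tau>) \<xi> / (\<beta> \<tau> exp(-\<mu>\<tau>) g(\<xi>))\<close>. The Hill function is a weighted mean of
  \<open>gm\<close> and \<open>gp\<close>, so \<open>g0 \<le> g(\<xi>) \<le> gU\<close>, and \<open>\<omega>\<tau>\<close> lies between \<open>\<pi>(2k+1/2)\<close> and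
  \<open>\<pi>(2k+1)\<close>; hence \<open>\<omega>/\<gamma>\<close> lies between the two linear functions of \<open>\<xi>\<close> occurring in
  \<open>m\<close> and \<open>M\<close>. Both claims then follow from the monotonicity of \<open>X \<mapsto> sqrt(1 + X\<^sup>2)\<close>
  and from \<open>1 < sqrt(1 + X\<^sup>2) < 1 + X\<close> for \<open>X > 0\<close>.\<close>

lemma weighted_mean_between:
  fixes a b x y :: real
  assumes "a > 0" "b > 0"
  shows "min x y \<le> (x * a + y * b) / (a + b)" "(x * a + y * b) / (a + b) \<le> max x y"
proof -
  have "min x y * (a + b) \<le> x * a + y * b" "x * a + y * b \<le> max x y * (a + b)"
    using assms by (simp_all add: distrib_left mult_right_mono add_mono)
  then show "min x y \<le> (x * a + y * b) / (a + b)" "(x * a + y * b) / (a + b) \<le> max x y"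
    using assms by (simp_all add: pos_le_divide_eq pos_divide_le_eq)
qed

lemma hill_g_between:
  assumes "thg > 0" "x > 0"
  shows "min gm gp \<le> hill_g gm gp thg n x" "hill_g gm gp thg n x \<le> max gm gp"
  using weighted_mean_between[of "thg powr n" "x powr n" gm gp] assms
  by (simp_all add: hill_g_def)

lemma frequency_ratio_bounds:
  fixes \<beta> e \<tau> \<xi> \<omega> G g0 gU a b :: real
  assumes "\<beta> > 0" "e > 0" "\<tau> > 0" "\<xi> > 0"
    and "g0 > 0" "g0 \<le> G" "G \<le> gU"
    and "0 \<le> a" "a \<le> \<omega> * \<tau>" "\<omega> * \<tau> \<le> b"
  shows "a / (\<beta> * \<tau> * e * gU) * \<xi> \<le> \<omega> / (\<beta> / \<xi> * e * G)"
    and "\<omega> / (\<beta> / \<xi> * e * G) \<le> b / (\<beta> * \<tau> * e * g0) * \<xi>"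
proof -
  have ratio: "\<omega> / (\<beta> / \<xi> * e * G) = (\<omega> * \<tau>) / (\<beta> * \<tau> * e * G) * \<xi>"
    using assms by (simp add: field_simps)
  have "a / (\<beta> * \<tau> * e * gU) \<le> (\<omega> * \<tau>) / (\<beta> * \<tau> * e * G)"
    using assms by (intro frac_le mult_left_mono) auto
  then show "a / (\<beta> * \<tau> * e * gU) * \<xi> \<le> \<omega> / (\<beta> / \<xi> * e * G)"
    unfolding ratio by (rule mult_right_mono) (use assms in simp)
  have "(\<omega> * \<tau>) / (\<beta> * \<tau> * e * G) \<le> b / (\<beta> * \<tau> * e * g0)"
    using assms by (intro frac_le mult_left_mono) auto
  then show "\<omega> / (\<beta> / \<xi> * e * G) \<le> b / (\<beta> * \<tau> * e * g0) * \<xi>"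
    unfolding ratio by (rule mult_right_mono) (use assms in simp)
qed

lemma sqrt_one_plus_square_less:
  fixes X :: real
  assumes "X > 0"
  shows "sqrt (1 + X\<^sup>2) < 1 + X"
proof -
  have "1 + X\<^sup>2 < (1 + X)\<^sup>2"
    using assms by (simp add: power2_eq_square algebra_simps)
  then show ?thesis
    using assms by (simp add: real_less_lsqrt)
qed

theorem proposition5p2:
  fixes \<beta> \<mu> \<tau> gm gp thg n \<xi> \<omega> :: real and k :: nat
  assumes "\<beta> > 0" "\<mu> > 0" "\<tau> > 0"
    and "gm > 0" "gp > 0" "thg > 0" "n > 0"
    and "\<xi> > 0"
    and "\<omega> > 0"
    and "\<omega> * cot (\<omega> * \<tau>) = - (\<beta> / \<xi> * exp (- \<mu> * \<tau>) * hill_g gm gp thg n \<xi>)"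
    and "pi / 2 + 2 * real k * pi < \<omega> * \<tau>" "\<omega> * \<tau> < pi + 2 * real k * pi"
  shows
    "let g0 = min gm gp; gU = max gm gp;
         \<gamma> = \<beta> / \<xi> * exp (- \<mu> * \<tau>) * hill_g gm gp thg n \<xi>;
         s = sqrt (1 + (\<omega> / \<gamma>)\<^sup>2);
         m = sqrt (1 + (pi * (2 * real k + 1/2) / (\<beta> * \<tau> * exp (- \<mu> * \<tau>) * gU))\<^sup>2 * \<xi>\<^sup>2);
         M = sqrt (1 + (pi * (2 * real k + 1) / (\<beta> * \<tau> * exp (- \<mu> * \<tau>) * g0))\<^sup>2 * \<xi>\<^sup>2)
     in (m \<le> s \<and> s \<le> M) \<and>
        (1 < s \<and> s < 1 + pi * (2 * real k + 1) / (\<beta> * \<tau> * exp (- \<mu> * \<tau>) * g0) * \<xi>)"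
proof -
  define r where "r = \<omega> / (\<beta> / \<xi> * exp (- \<mu> * \<tau>) * hill_g gm gp thg n \<xi>)"
  define A where "A = pi * (2 * real k + 1/2) / (\<beta> * \<tau> * exp (- \<mu> * \<tau>) * max gm gp) * \<xi>"
  define B where "B = pi * (2 * real k + 1) / (\<beta> * \<tau> * exp (- \<mu> * \<tau>) * min gm gp) * \<xi>"
  have A_le_r: "A \<le> r" and r_le_B: "r \<le> B"
    using frequency_ratio_bounds[of \<beta> "exp (- \<mu> * \<tau>)" \<tau> \<xi> "min gm gp"
        "hill_g gm gp thg n \<xi>" "max gm gp" "pi * (2 * real k + 1/2)" \<omega> "pi * (2 * real k + 1)"]
      hill_g_between[of thg \<xi> gm gp n] assms
    by (simp_all add: A_def B_def r_def algebra_simps)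
  have A_pos: "A > 0"
    using assms by (simp add: A_def)
  have m_le_s: "sqrt (1 + A\<^sup>2) \<le> sqrt (1 + r\<^sup>2)" and s_le_M: "sqrt (1 + r\<^sup>2) \<le> sqrt (1 + B\<^sup>2)"
    and one_less_s: "1 < sqrt (1 + r\<^sup>2)"
    using A_le_r r_le_B A_pos by (simp_all add: power_mono)
  have s_less: "sqrt (1 + r\<^sup>2) < 1 + B"
    using s_le_M sqrt_one_plus_square_less[of B] A_le_r r_le_B A_pos by linarith
  have A_sq: "(pi * (2 * real k + 1/2) / (\<beta> * \<tau> * exp (- \<mu> * \<tau>) * max gm gp))\<^sup>2 * \<xi>\<^sup>2 = A\<^sup>2"
    and B_sq: "(pi * (2 * real k + 1) / (\<beta> * \<tau> * exp (- \<mu> * \<tau>) * min gm gp))\<^sup>2 * \<xi>\<^sup>2 = B\<^sup>2"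
    unfolding A_def B_def power_mult_distrib by simp_all
  show ?thesis
    unfolding Let_def r_def[symmetric] B_def[symmetric] A_sq B_sq
    using m_le_s s_le_M one_less_s s_less by blast
qed

end
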